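(* In the theory $\mathfrak{T}$, the following holds for every formula $\Phi(\alpha,\beta)$ (possibly with parameters). For every nonempty set $X$, if for every $\alpha\in X$ there is exactly one $\beta$ with $\Phi(\alpha,\beta)$, then there exist a function $F_X$ on $X$ and a set $Y$ such that $F_X:X\twoheadrightarrow Y$ and, for every $\eta\in X$, $F_X:\eta\mapsto \iota\xi\,\Phi(\eta,\xi)$. Here $\iota\xi\,\Phi(\eta,\xi)$ denotes the unique $\xi$ with $\Phi(\eta,\xi)$.
   Context: The theory $\mathfrak{T}$ is set up as follows. The universe consists of "things", each of which is either a set or a function on a set. Variables $\alpha,\beta,\gamma,\eta,\xi,\zeta,\dots$ range over all things and $X,Y,Z,\dots$ range over sets. For a set $X$, the symbols $f_X,g_X,F_X,\dots$ range over functions on $X$. The primitive predicates are $\alpha\in\beta$, $\alpha=\beta$, the ternary predicate $f:Y\twoheadrightarrow Z$ (read "$f$ has domain $Y$ and codomain $Z$") and the ternary predicate $f:\alpha\mapsto\beta$ (read "$f$ maps $\alpha$ to $\beta$"). Notation: $\alpha^+$ is the singleton $\{\alpha\}$ and $\langle\alpha,\beta\rangle:=\{\alpha,\{\alpha,\beta\}\}$. An ur-function is a function on a singleton $\alpha^+$. For a function $f$ and an argument $\alpha$ with a unique $\beta$ such that $f:\alpha\mapsto\beta$, this $\beta$ is written $f(\alpha)$. Axioms of $\mathfrak{T}$: - Extensionality for sets. - No function on a set is a set. - A set has no domain or codomain and maps nothing to anything. - There is an empty set $\emptyset$. - Pairing: for all $\alpha,\beta$ the set $\{\alpha,\beta\}$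 exists. - Union (sum set). - Power set. - Infinity: $\omega$ is the set of finite Zermelo ordinals, where $0=\emptyset$ and $n+1=n^+$. - Regularity. - A function on a set has no elements. - (GEN-F) For nonempty $X$, every $f_X$ satisfies $f_X:Y\twoheadrightarrow Z$ for some sets $Y,Z$, and for each $\alpha\in Y$ there is a unique $\beta$ with $f_X:\alpha\mapsto\beta$. - $f_X$ has no domain other than $X$. - $f_X:\alpha\mapsto\beta$ implies $\alpha\in X$. - For nonempty $X$, if $f_X:X\twoheadrightarrow\beta$ then $\beta$ is the image set $f_X[X]=\{\gamma:\exists\eta\in X\,(f_X:\eta\mapsto\gamma)\}$. - (INV) For nonempty $X$ with $f_X:X\twoheadrightarrow Y$, for every $\beta$ the set $\{\alpha\in X: f_X:\alpha\mapsto\beta\}$ exists. - (EXT-F) $f_X=g_Y$ iff $X=Y$ and, for all $\alpha,\beta$, $f_X:\alpha\mapsto\beta \iff g_Y:\alpha\mapsto\beta$. - There is an inactive function $1_\emptyset$ with $1_\emptyset:\emptyset\twoheadrightarrow\emptyset$ that maps nothing. - (UFA) For all $\alpha,\beta$ there is an ur-function $f_{\alpha^+}$ with $f_{\alpha^+}:\alpha^+\twoheadrightarrow\beta^+$ and $f_{\alpha^+}:\alpha\mapsto\beta$. - (REG-F) If $f_X:X\twoheadrightarrow Y$, then for every $\alpha$, neither $f_X:f_X\mapsto\alpha$ nor $f_X:\alpha\mapsto f_X$. - (SUM-F, nonstandard, with a multiple quantifier over families) For every nonempty set $X$ and every family $(f_{\alpha^+})_{\alpha\in X}$ that assigns to each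 $\alpha\in X$ an ur-function $f_{\alpha^+}$ on $\alpha^+$, there exist a function $F_X$ and a set $Y$ with $F_X:X\twoheadrightarrow Y$ and $F_X:\alpha\mapsto f_{\alpha^+}(\alpha)$ for every $\alpha\in X$. *)

theory Defs
  imports Main
begin

text \<open>Parameters:
   isSet a      : a is a set
   funOn f X    : f is a function on the set X (the sort of f_X)
   mem a b      : a \<in> b
   dc f Y Z     : f : Y ->> Z   (f has domain Y and codomain Z)
   mp f a b     : f : a |-> b   (f maps a to b)
  Equality is HOL equality.\<close>

definition is_empty :: "('u \<Rightarrow> 'u \<Rightarrow> bool) \<Rightarrow> 'u \<Rightarrow> bool" where
  "is_empty mem X \<longleftrightarrow> (\<forall>a. \<not> mem a X)"

definition is_sng :: "('u \<Rightarrow> bool) \<Rightarrow> ('u \<Rightarrow> 'u \<Rightarrow> bool) \<Rightarrow> 'u \<Rightarrow> 'u \<Rightarrow> bool" where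
  "is_sng isSet mem S a \<longleftrightarrow> isSet S \<and> (\<forall>g. mem g S \<longleftrightarrow> g = a)"

text \<open>x is the n-th finite Zermelo ordinal: 0 = empty set, n+1 = n^+.\<close>
fun zerm :: "('u \<Rightarrow> bool) \<Rightarrow> ('u \<Rightarrow> 'u \<Rightarrow> bool) \<Rightarrow> nat \<Rightarrow> 'u \<Rightarrow> bool" where
  "zerm isSet mem 0 x \<longleftrightarrow> isSet x \<and> is_empty mem x"
| "zerm isSet mem (Suc n) x \<longleftrightarrow> (\<exists>y. zerm isSet mem n y \<and> is_sng isSet mem x y)"

definition app :: "('u \<Rightarrow> 'u \<Rightarrow> 'u \<Rightarrow> bool) \<Rightarrow> 'u \<Rightarrow> 'u \<Rightarrow> 'u" where
  "app mp f a = (THE b. mp f a b)"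

definition T_axioms ::
  "('u \<Rightarrow> bool) \<Rightarrow> ('u \<Rightarrow> 'u \<Rightarrow> bool) \<Rightarrow> ('u \<Rightarrow> 'u \<Rightarrow> bool)
   \<Rightarrow> ('u \<Rightarrow> 'u \<Rightarrow> 'u \<Rightarrow> bool) \<Rightarrow> ('u \<Rightarrow> 'u \<Rightarrow> 'u \<Rightarrow> bool) \<Rightarrow> bool" where
  "T_axioms isSet funOn mem dc mp \<longleftrightarrow>
    \<comment> \<open>setup: each thing is a set or a function on a set; functions are on sets\<close>
    (\<forall>a. isSet a \<or> (\<exists>X. funOn a X)) \<and>
    (\<forall>f X. funOn f X \<longrightarrow> isSet X) \<and>
    \<comment> \<open>extensionality for sets\<close>
    (\<forall>X Y. isSet X \<and> isSet Y \<and> (\<forall>a. mem a X \<longleftrightarrow> mem a Y) \<longrightarrow> X = Y) \<and>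
    \<comment> \<open>no function on a set is a set\<close>
    (\<forall>f X. funOn f X \<longrightarrow> \<not> isSet f) \<and>
    \<comment> \<open>a set has no domain or codomain and maps nothing to anything\<close>
    (\<forall>X a b. isSet X \<longrightarrow> \<not> dc X a b \<and> \<not> mp X a b) \<and>
    \<comment> \<open>empty set\<close>
    (\<exists>E. isSet E \<and> is_empty mem E) \<and>
    \<comment> \<open>pairing\<close>
    (\<forall>a b. \<exists>P. isSet P \<and> (\<forall>g. mem g P \<longleftrightarrow> g = a \<or> g = b)) \<and>
    \<comment> \<open>union\<close>
    (\<forall>X. isSet X \<longrightarrow> (\<exists>U. isSet U \<and> (\<forall>g. mem g U \<longleftrightarrow> (\<exists>Z. mem Z X \<and> mem g Z)))) \<and>
    \<comment> \<open>power set\<close>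
    (\<forall>X. isSet X \<longrightarrow> (\<exists>P. isSet P \<and>
        (\<forall>Z. mem Z P \<longleftrightarrow> isSet Z \<and> (\<forall>g. mem g Z \<longrightarrow> mem g X)))) \<and>
    \<comment> \<open>infinity: omega is the set of finite Zermelo ordinals\<close>
    (\<exists>W. isSet W \<and> (\<forall>x. mem x W \<longleftrightarrow> (\<exists>n. zerm isSet mem n x))) \<and>
    \<comment> \<open>regularity\<close>
    (\<forall>X. isSet X \<and> \<not> is_empty mem X \<longrightarrow>
        (\<exists>a. mem a X \<and> \<not> (\<exists>g. mem g a \<and> mem g X))) \<and>
    \<comment> \<open>a function on a set has no elements\<close>
    (\<forall>f X a. funOn f X \<longrightarrow> \<not> mem a f) \<and>
    \<comment> \<open>GEN-F\<close>
    (\<forall>f X. funOn f X \<and> \<not> is_empty mem X \<longrightarrow>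
        (\<exists>Y Z. isSet Y \<and> isSet Z \<and> dc f Y Z \<and> (\<forall>a. mem a Y \<longrightarrow> (\<exists>!b. mp f a b)))) \<and>
    \<comment> \<open>f_X has no domain other than X\<close>
    (\<forall>f X Y Z. funOn f X \<and> dc f Y Z \<longrightarrow> Y = X) \<and>
    \<comment> \<open>f_X : a |-> b implies a in X\<close>
    (\<forall>f X a b. funOn f X \<and> mp f a b \<longrightarrow> mem a X) \<and>
    \<comment> \<open>codomain is the image set\<close>
    (\<forall>f X b. funOn f X \<and> \<not> is_empty mem X \<and> dc f X b \<longrightarrow>
        isSet b \<and> (\<forall>g. mem g b \<longleftrightarrow> (\<exists>e. mem e X \<and> mp f e g))) \<and>
    \<comment> \<open>INV\<close>
    (\<forall>f X Y. funOn f X \<and> \<not> is_empty mem X \<and> isSet Y \<and> dc f X Y \<longrightarrow>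
        (\<forall>b. \<exists>S. isSet S \<and> (\<forall>a. mem a S \<longleftrightarrow> mem a X \<and> mp f a b))) \<and>
    \<comment> \<open>EXT-F\<close>
    (\<forall>f X g Y. funOn f X \<and> funOn g Y \<longrightarrow>
        (f = g \<longleftrightarrow> X = Y \<and> (\<forall>a b. mp f a b \<longleftrightarrow> mp g a b))) \<and>
    \<comment> \<open>inactive function 1_empty\<close>
    (\<exists>i E. isSet E \<and> is_empty mem E \<and> funOn i E \<and> dc i E E \<and> (\<forall>a b. \<not> mp i a b)) \<and>
    \<comment> \<open>UFA\<close>
    (\<forall>a b A B. is_sng isSet mem A a \<and> is_sng isSet mem B b \<longrightarrow>
        (\<exists>f. funOn f A \<and> dc f A B \<and> mp f a b)) \<and>
    \<comment> \<open>REG-F\<close>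
    (\<forall>f X Y. funOn f X \<and> isSet Y \<and> dc f X Y \<longrightarrow> (\<forall>a. \<not> mp f f a \<and> \<not> mp f a f)) \<and>
    \<comment> \<open>SUM-F (quantifying over families of ur-functions, represented as HOL functions)\<close>
    (\<forall>X fam. isSet X \<and> \<not> is_empty mem X \<and>
        (\<forall>a. mem a X \<longrightarrow> (\<exists>A. is_sng isSet mem A a \<and> funOn (fam a) A)) \<longrightarrow>
        (\<exists>F Y. funOn F X \<and> isSet Y \<and> dc F X Y \<and>
           (\<forall>a. mem a X \<longrightarrow> mp F a (app mp (fam a) a))))"

end

theory Submission
  imports Defs
begin

text \<open>Choose, for each \<eta> \<in> X, an ur-function on the singleton of \<eta> whose value at \<eta> is
  \<iota>\<xi>.\<Phi>(\<eta>,\<xi>), and glue the family together with SUM-F.  UFA provides an ur-function mapping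
  \<eta> to the intended value; by GEN-F and the domain axiom this is its only value at \<eta>, so it is
  what the application operator returns.  The family itself is chosen in the meta-theory, which
  is exactly what the multiple quantifier of SUM-F ranges over.\<close>

context
  fixes isSet :: "'u \<Rightarrow> bool" and funOn mem :: "'u \<Rightarrow> 'u \<Rightarrow> bool"
    and dc mp :: "'u \<Rightarrow> 'u \<Rightarrow> 'u \<Rightarrow> bool"
  assumes T: "T_axioms isSet funOn mem dc mp"
begin

lemma pairing_axiom: "\<forall>a b. \<exists>P. isSet P \<and> (\<forall>g. mem g P \<longleftrightarrow> g = a \<or> g = b)"
  using T unfolding T_axioms_def by (elim conjE) assumption

lemma ufa_axiom:
  "\<forall>a b A B. is_sng isSet mem A a \<and> is_sng isSet mem B b \<longrightarrow> (\<exists>f. funOn f A \<and> dc f A B \<and> mp f a b)"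
  using T unfolding T_axioms_def by (elim conjE) assumption

lemma function_single_valued_on_domain:
  assumes f: "funOn f X" and "\<not> is_empty mem X" and "mem a X"
  shows "\<exists>!b. mp f a b"
proof -
  have "\<forall>f X. funOn f X \<and> \<not> is_empty mem X \<longrightarrow>
      (\<exists>Y Z. isSet Y \<and> isSet Z \<and> dc f Y Z \<and> (\<forall>a. mem a Y \<longrightarrow> (\<exists>!b. mp f a b)))"
    using T unfolding T_axioms_def by (elim conjE) assumption
  then obtain Y Z where "dc f Y Z" and single_valued: "\<forall>a. mem a Y \<longrightarrow> (\<exists>!b. mp f a b)"
    using assms(1,2) by blast
  have "\<forall>f X Y Z. funOn f X \<and> dc f Y Z \<longrightarrow> Y = X"
    using T unfolding T_axioms_def by (elim conjE) assumption
  with f \<open>dc f Y Z\<close> have "Y = X" by blast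
  with single_valued \<open>mem a X\<close> show ?thesis by blast
qed

lemma sum_of_ur_function_family:
  assumes "isSet X" "\<not> is_empty mem X"
    and "\<forall>a. mem a X \<longrightarrow> (\<exists>A. is_sng isSet mem A a \<and> funOn (fam a) A)"
  shows "\<exists>F Y. funOn F X \<and> isSet Y \<and> dc F X Y \<and> (\<forall>a. mem a X \<longrightarrow> mp F a (app mp (fam a) a))"
proof -
  have "\<forall>X fam. isSet X \<and> \<not> is_empty mem X \<and>
      (\<forall>a. mem a X \<longrightarrow> (\<exists>A. is_sng isSet mem A a \<and> funOn (fam a) A)) \<longrightarrow>
      (\<exists>F Y. funOn F X \<and> isSet Y \<and> dc F X Y \<and> (\<forall>a. mem a X \<longrightarrow> mp F a (app mp (fam a) a)))"
    using T unfolding T_axioms_def by (elim conjE) assumption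
  with assms show ?thesis by blast
qed

lemma singleton_exists: "\<exists>A. is_sng isSet mem A a"
  using pairing_axiom unfolding is_sng_def by blast

lemma ur_function_with_value_exists: "\<exists>f A. is_sng isSet mem A a \<and> funOn f A \<and> app mp f a = b"
proof -
  obtain A where A: "is_sng isSet mem A a" using singleton_exists by blast
  obtain B where B: "is_sng isSet mem B b" using singleton_exists by blast
  obtain f where f: "funOn f A" "dc f A B" "mp f a b" using ufa_axiom A B by blast
  have "mem a A" "\<not> is_empty mem A" using A unfolding is_sng_def is_empty_def by auto
  then have "\<exists>!b. mp f a b" using function_single_valued_on_domain f(1) by blast
  with f(3) have "app mp f a = b" unfolding app_def by (blast intro: the_equality)
  with A f(1) show ?thesis by blast
qed

end

theorem mainTheorem2:
  fixes isSet :: "'u \<Rightarrow> bool" and funOn mem :: "'u \<Rightarrow> 'u \<Rightarrow> bool"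
    and dc mp :: "'u \<Rightarrow> 'u \<Rightarrow> 'u \<Rightarrow> bool"
    and \<Phi> :: "'u \<Rightarrow> 'u \<Rightarrow> bool" and X :: 'u
  assumes "T_axioms isSet funOn mem dc mp"
    and "isSet X" and "\<not> is_empty mem X"
    and "\<forall>\<alpha>. mem \<alpha> X \<longrightarrow> (\<exists>!\<beta>. \<Phi> \<alpha> \<beta>)"
  shows "\<exists>F Y. funOn F X \<and> isSet Y \<and> dc F X Y \<and>
           (\<forall>\<eta>. mem \<eta> X \<longrightarrow> mp F \<eta> (THE \<xi>. \<Phi> \<eta> \<xi>))"
proof -
  have "\<forall>a. \<exists>f A. is_sng isSet mem A a \<and> funOn f A \<and> app mp f a = (THE \<xi>. \<Phi> a \<xi>)"
    using ur_function_with_value_exists[OF assms(1)] by blast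
  then obtain fam where fam:
    "\<And>a. \<exists>A. is_sng isSet mem A a \<and> funOn (fam a) A \<and> app mp (fam a) a = (THE \<xi>. \<Phi> a \<xi>)"
    by metis
  then obtain F Y where "funOn F X" "isSet Y" "dc F X Y"
      "\<forall>a. mem a X \<longrightarrow> mp F a (app mp (fam a) a)"
    using sum_of_ur_function_family[OF assms(1-3), of fam] by blast
  with fam show ?thesis by metis
qed

end
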